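(* Let $G$ be a mixed signed, directed graph on vertices $\{1,\dots,n\}$ and suppose $v^*\in(\mathbb{R}^n)^*$ satisfies $\langle v^*,x\rangle=0$ for all $x\in\mathcal{P}_G$. Let $\widetilde{G}_1,\dots,\widetilde{G}_r$ be the bipartite components of the augmented signed graph $\widetilde G$, with bipartitions $V(\widetilde{G}_s)=\widetilde L_s\cup\widetilde R_s$. Then $v^*$ is a linear combination of $e^*_{\pi(\widetilde L_1)}-e^*_{\pi(\widetilde R_1)},\dots,e^*_{\pi(\widetilde L_r)}-e^*_{\pi(\widetilde R_r)}$.
   Context: A mixed signed, directed graph $G$ on vertex set $\{1,\dots,n\}$ has a set of signed edges $+ij$ or $-ij$ (loops $\pm ii$ allowed) and directed edges $(i,j)$ with $i\ne j$; between a pair of vertices any subset of $+ij,-ij,(i,j),(j,i)$ may occur. Define $\rho(\pm ij)=\pm(e_i+e_j)$ (so $\rho(\pm ii)=\pm2e_i$) and $\rho((i,j))=e_j-e_i$ in $\mathbb{R}^n$; $\mathcal{P}_G=\mathrm{conv}(\rho(E(G)))$. The augmented signed graph $\widetilde G$ is the signed graph obtained by replacing each directed edge $(i,j)$ by a new (artificial) vertex $t_{(i,j)}$ and the two edges $-i\,t_{(i,j)}$ and $+t_{(i,j)}\,j$. For a set $S$ of vertices of $\widetilde G$, $\pi(S)=S\cap\{1,\dots,n\}$ (the non-artificial vertices of $S$). A component of a signed graph is a maximal connected subgraph (isolated vertices are components); it is bipartite if its vertex set can be partitioned into $L,R$ (one possibly empty) such that every edge has exactly one endpoint in each (a component with a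 loop is not bipartite). For $S\subseteq\{1,\dots,n\}$, $e_S^*=\sum_{i\in S}e_i^*$ in the dual basis. *)

theory Defs
  imports "HOL-Analysis.Analysis"
begin

text \<open>A mixed signed, directed graph on the finite vertex type 'n is given by
  SP (positive signed edges +ij, as pairs; (i,i) is a loop), SN (negative signed
  edges -ij) and D (directed edges (i,j), i \<noteq> j).\<close>

definition ev :: "'n::finite \<Rightarrow> real^'n" where
  "ev i = (\<chi> k. if k = i then 1 else 0)"

definition rho_set :: "('n::finite \<times> 'n) set \<Rightarrow> ('n \<times> 'n) set \<Rightarrow> ('n \<times> 'n) set \<Rightarrow> (real^'n) set" where
  "rho_set SP SN D =
     (\<lambda>(i,j). ev i + ev j) ` SP \<union> (\<lambda>(i,j). - (ev i + ev j)) ` SN \<union> (\<lambda>(i,j). ev j - ev i) ` D"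

definition PG :: "('n::finite \<times> 'n) set \<Rightarrow> ('n \<times> 'n) set \<Rightarrow> ('n \<times> 'n) set \<Rightarrow> (real^'n) set" where
  "PG SP SN D = convex hull (rho_set SP SN D)"

text \<open>Augmented signed graph: vertices Inl i (original) and Inr (i,j) = t_(i,j) (artificial).
  Edges as unordered pairs (signs are irrelevant for components and bipartiteness).\<close>

definition aug_vertices :: "('n \<times> 'n) set \<Rightarrow> ('n + ('n \<times> 'n)) set" where
  "aug_vertices D = range Inl \<union> Inr ` D"

definition aug_edges :: "('n \<times> 'n) set \<Rightarrow> ('n \<times> 'n) set \<Rightarrow> ('n \<times> 'n) set
     \<Rightarrow> (('n + ('n \<times> 'n)) \<times> ('n + ('n \<times> 'n))) set" where
  "aug_edges SP SN D =
     {(Inl i, Inl j) | i j. (i,j) \<in> SP \<union> SN}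
     \<union> {(Inl i, Inr (i,j)) | i j. (i,j) \<in> D}
     \<union> {(Inr (i,j), Inl j) | i j. (i,j) \<in> D}"

definition aug_adj where
  "aug_adj SP SN D = aug_edges SP SN D \<union> (aug_edges SP SN D)\<inverse>"

definition aug_components where
  "aug_components SP SN D =
     {C. \<exists>u \<in> aug_vertices D. C = {w. (u,w) \<in> (aug_adj SP SN D)\<^sup>*}}"

definition is_bipartition where
  "is_bipartition SP SN D C L R \<longleftrightarrow>
     L \<union> R = C \<and> L \<inter> R = {} \<and>
     (\<forall>(u,w) \<in> aug_edges SP SN D. u \<in> C \<and> w \<in> C \<longrightarrow>
        ((u \<in> L \<and> w \<in> R) \<or> (u \<in> R \<and> w \<in> L)))"

definition bipartite_comp where
  "bipartite_comp SP SN D C \<longleftrightarrow> (\<exists>L R. is_bipartition SP SN D C L R)"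

definition proj :: "('n + ('n \<times> 'n)) set \<Rightarrow> 'n set" where
  "proj S = {i. Inl i \<in> S}"

definition edual :: "'n::finite set \<Rightarrow> real^'n" where
  "edual S = (\<chi> i. if i \<in> S then 1 else 0)"

end

theory Submission
  imports Defs
begin

text \<open>Give every vertex of the augmented graph the potential v_i if it is the original vertex i,
  and -v_i if it is the artificial vertex t_(i,j). Orthogonality of v to the polytope says exactly
  that the potentials at the two ends of every augmented edge sum to zero (for the two edges at
  t_(i,j) because a directed edge (i,j) forces v_i = v_j). Along a path the
  potential therefore alternates in sign: on a bipartite component it equals c on one side and -c
  on the other, so that v restricted to that component is c times the vector of the bipartition,
  while on a non-bipartite component the sets of vertices with potential c and -c would form a
  bipartition unless c = 0.\<close>

lemma inner_ev: "v \<bullet> ev i = v $ i"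
proof -
  have "ev i = axis i 1" by (simp add: ev_def axis_def vec_eq_iff)
  then show ?thesis by (simp add: inner_axis)
qed

lemma PG_orthogonal_edges:
  assumes "\<forall>x \<in> PG SP SN D. v \<bullet> x = 0"
  shows PG_orthogonal_signed: "(i, j) \<in> SP \<union> SN \<Longrightarrow> v $ i + v $ j = 0"
    and PG_orthogonal_directed: "(i, j) \<in> D \<Longrightarrow> v $ j = v $ i"
proof -
  have rho: "v \<bullet> x = 0" if "x \<in> rho_set SP SN D" for x
    using assms hull_inc[OF that, of convex] unfolding PG_def by blast
  show "v $ i + v $ j = 0" if "(i, j) \<in> SP \<union> SN"
  proof -
    have "(i, j) \<in> SP \<Longrightarrow> ev i + ev j \<in> rho_set SP SN D"
      and "(i, j) \<in> SN \<Longrightarrow> - (ev i + ev j) \<in> rho_set SP SN D"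
      unfolding rho_set_def by force+
    then show ?thesis
      using that rho[of "ev i + ev j"] rho[of "- (ev i + ev j)"]
      by (auto simp only: inner_minus_right inner_add_right inner_ev neg_equal_0_iff_equal)
  qed
  show "v $ j = v $ i" if "(i, j) \<in> D"
  proof -
    have "ev j - ev i \<in> rho_set SP SN D" using that unfolding rho_set_def by force
    then show ?thesis using rho[of "ev j - ev i"] by (simp add: inner_diff_right inner_ev)
  qed
qed

definition aug_potential :: "real^'n::finite \<Rightarrow> 'n + ('n \<times> 'n) \<Rightarrow> real" where
  "aug_potential v x = (case x of Inl i \<Rightarrow> v $ i | Inr (i, j) \<Rightarrow> - v $ i)"

definition side_sign :: "'a set \<Rightarrow> 'a \<Rightarrow> real" where
  "side_sign L x = (if x \<in> L then 1 else -1)"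

lemma aug_potential_adj:
  assumes "\<forall>x \<in> PG SP SN D. v \<bullet> x = 0" and "(a, b) \<in> aug_adj SP SN D"
  shows "aug_potential v b = - aug_potential v a"
proof -
  have edge: "aug_potential v a + aug_potential v b = 0" if "(a, b) \<in> aug_edges SP SN D" for a b
    using that PG_orthogonal_signed[OF assms(1)] PG_orthogonal_directed[OF assms(1)]
    unfolding aug_edges_def by (auto simp: aug_potential_def)
  have "(a, b) \<in> aug_edges SP SN D \<or> (b, a) \<in> aug_edges SP SN D"
    using assms(2) unfolding aug_adj_def by blast
  then have "aug_potential v a + aug_potential v b = 0"
    using edge add.commute by metis
  then show ?thesis by linarith
qed

lemma rtrancl_invariant:
  assumes "(x, y) \<in> A\<^sup>*" and "P x"
    and "\<And>a b. (a, b) \<in> A \<Longrightarrow> P a \<Longrightarrow> P b \<and> g b = g a"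
  shows "P y \<and> g y = g x"
  using assms(1) by induction (use assms in auto)

lemma aug_adj_rtrancl_sym: "(x, y) \<in> (aug_adj SP SN D)\<^sup>* \<Longrightarrow> (y, x) \<in> (aug_adj SP SN D)\<^sup>*"
  using sym_rtrancl[of "aug_adj SP SN D"] unfolding aug_adj_def sym_def by blast

lemma aug_components_closed:
  assumes "C \<in> aug_components SP SN D" "x \<in> C" "(x, y) \<in> (aug_adj SP SN D)\<^sup>*"
  shows "y \<in> C"
  using assms unfolding aug_components_def by (auto intro: rtrancl_trans)

lemma aug_components_connected:
  assumes "C \<in> aug_components SP SN D" "x \<in> C" "y \<in> C"
  shows "(x, y) \<in> (aug_adj SP SN D)\<^sup>*"
  using assms unfolding aug_components_def by (auto intro: rtrancl_trans aug_adj_rtrancl_sym)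

lemma aug_components_disjoint:
  assumes "C \<in> aug_components SP SN D" "C' \<in> aug_components SP SN D" "x \<in> C" "x \<in> C'"
  shows "C = C'"
  using assms aug_components_closed aug_components_connected by blast

lemma aug_components_containing_Inl:
  "{C \<in> aug_components SP SN D. Inl i \<in> C} = {{w. (Inl i, w) \<in> (aug_adj SP SN D)\<^sup>*}}"
proof -
  let ?C = "{w. (Inl i, w) \<in> (aug_adj SP SN D)\<^sup>*}"
  have "?C \<in> aug_components SP SN D" "Inl i \<in> ?C"
    unfolding aug_components_def aug_vertices_def by blast+
  then show ?thesis using aug_components_disjoint by blast
qed

lemma aug_components_nonempty: "C \<in> aug_components SP SN D \<Longrightarrow> C \<noteq> {}"
  unfolding aug_components_def by blast

lemma bipartition_side_sign_adj:
  assumes "is_bipartition SP SN D C L R" "(a, b) \<in> aug_adj SP SN D" "a \<in> C" "b \<in> C"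
  shows "side_sign L b = - side_sign L a"
proof -
  have "a \<in> L \<and> b \<in> R \<or> a \<in> R \<and> b \<in> L" and "L \<inter> R = {}"
    using assms unfolding is_bipartition_def aug_adj_def by blast+
  then show ?thesis unfolding side_sign_def by auto
qed

lemma bipartite_component_potential:
  assumes V: "\<forall>x \<in> PG SP SN D. v \<bullet> x = 0"
    and C: "C \<in> aug_components SP SN D" and B: "is_bipartition SP SN D C L R"
  shows "\<exists>c. \<forall>w \<in> C. aug_potential v w = c * side_sign L w"
proof -
  let ?g = "\<lambda>w. aug_potential v w * side_sign L w"
  obtain x where x: "x \<in> C" using aug_components_nonempty[OF C] by blast
  have "?g w = ?g x" if "w \<in> C" for w
  proof (rule conjunct2[OF rtrancl_invariant[where P = "\<lambda>w. w \<in> C"]])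
    show "(x, w) \<in> (aug_adj SP SN D)\<^sup>*" using aug_components_connected[OF C x that] .
    show "b \<in> C \<and> ?g b = ?g a" if "(a, b) \<in> aug_adj SP SN D" "a \<in> C" for a b
    proof -
      have "b \<in> C" using aug_components_closed[OF C] that by blast
      then show ?thesis
        using that aug_potential_adj[OF V] bipartition_side_sign_adj[OF B] by simp
    qed
  qed (rule x)
  moreover have "aug_potential v w = ?g w * side_sign L w" for w
    by (simp add: side_sign_def)
  ultimately have "\<forall>w \<in> C. aug_potential v w = ?g x * side_sign L w"
    by metis
  then show ?thesis by blast
qed

lemma nonbipartite_component_potential:
  assumes V: "\<forall>x \<in> PG SP SN D. v \<bullet> x = 0"
    and C: "C \<in> aug_components SP SN D" and nonbip: "\<not> bipartite_comp SP SN D C"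
    and x: "x \<in> C"
  shows "aug_potential v x = 0"
proof (rule ccontr)
  let ?a = "aug_potential v x"
  let ?L = "{w \<in> C. aug_potential v w = ?a}" and ?R = "{w \<in> C. aug_potential v w = - ?a}"
  assume "?a \<noteq> 0"
  have "\<bar>aug_potential v w\<bar> = \<bar>?a\<bar>" if "w \<in> C" for w
    using rtrancl_invariant[where P = "\<lambda>_. True" and g = "\<lambda>w. \<bar>aug_potential v w\<bar>",
        OF aug_components_connected[OF C x that]] aug_potential_adj[OF V] by auto
  then have pm: "aug_potential v w = ?a \<or> aug_potential v w = - ?a" if "w \<in> C" for w
    using that abs_eq_iff by blast
  have "is_bipartition SP SN D C ?L ?R"
    unfolding is_bipartition_def
  proof (intro conjI ballI impI)
    show "?L \<union> ?R = C" using pm by blast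
    show "?L \<inter> ?R = {}" using \<open>?a \<noteq> 0\<close> by auto
    fix e assume "e \<in> aug_edges SP SN D"
    then obtain a b where e: "e = (a, b)" "(a, b) \<in> aug_adj SP SN D"
      unfolding aug_adj_def by (cases e) blast
    show "case e of (a, b) \<Rightarrow> a \<in> C \<and> b \<in> C \<longrightarrow>
        a \<in> ?L \<and> b \<in> ?R \<or> a \<in> ?R \<and> b \<in> ?L"
      using pm[of a] pm[of b] aug_potential_adj[OF V e(2)] \<open>?a \<noteq> 0\<close> unfolding e(1) by auto
  qed
  with nonbip show False unfolding bipartite_comp_def by blast
qed

lemma edual_proj_bipartition_nth:
  assumes "is_bipartition SP SN D C L R"
  shows "(edual (proj L) - edual (proj R)) $ i = (if Inl i \<in> C then side_sign L (Inl i) else 0)"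
  using assms unfolding is_bipartition_def by (auto simp: edual_def proj_def side_sign_def)

lemma eq_sum_bipartite_components:
  fixes SP SN D :: "('n::finite \<times> 'n) set" and L R :: "('n + 'n \<times> 'n) set \<Rightarrow> ('n + 'n \<times> 'n) set"
  defines "B \<equiv> {C \<in> aug_components SP SN D. bipartite_comp SP SN D C}"
  assumes V: "\<forall>x \<in> PG SP SN D. v \<bullet> x = 0"
    and bip: "\<And>C. C \<in> B \<Longrightarrow> is_bipartition SP SN D C (L C) (R C)"
  shows "\<exists>c. v = (\<Sum>C\<in>B. c C *\<^sub>R (edual (proj (L C)) - edual (proj (R C))))"
proof -
  obtain c where c: "\<And>C x. C \<in> B \<Longrightarrow> x \<in> C \<Longrightarrow> aug_potential v x = c C * side_sign (L C) x"
    using bipartite_component_potential[OF V _ bip] unfolding B_def by (metis (lifting) mem_Collect_eq)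
  have "v $ i = (\<Sum>C\<in>B. c C *\<^sub>R (edual (proj (L C)) - edual (proj (R C)))) $ i" for i
  proof -
    have "(\<Sum>C\<in>B. c C *\<^sub>R (edual (proj (L C)) - edual (proj (R C)))) $ i
        = (\<Sum>C\<in>B. if Inl i \<in> C then v $ i else 0)"
      unfolding sum_component
    proof (rule sum.cong[OF refl])
      fix C assume "C \<in> B"
      then show "(c C *\<^sub>R (edual (proj (L C)) - edual (proj (R C)))) $ i
          = (if Inl i \<in> C then v $ i else 0)"
        using c[of C "Inl i"] edual_proj_bipartition_nth[OF bip, of C i]
        by (auto simp: aug_potential_def)
    qed
    also have "\<dots> = v $ i * card {C \<in> B. Inl i \<in> C}"
      by (simp add: sum.inter_filter[symmetric])
    also have "\<dots> = v $ i"
    proof (cases "v $ i = 0")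
      case False
      then have "bipartite_comp SP SN D C" if "C \<in> aug_components SP SN D" "Inl i \<in> C" for C
        using nonbipartite_component_potential[OF V that(1) _ that(2)]
        by (auto simp: aug_potential_def)
      then have "{C \<in> B. Inl i \<in> C} = {C \<in> aug_components SP SN D. Inl i \<in> C}"
        unfolding B_def by blast
      then show ?thesis by (simp add: aug_components_containing_Inl)
    qed simp
    finally show ?thesis by simp
  qed
  then show ?thesis unfolding vec_eq_iff by blast
qed

theorem mainTheorem8:
  fixes SP SN D :: "('n::finite \<times> 'n) set" and v :: "real^'n"
    and bip :: "('n + ('n \<times> 'n)) set \<Rightarrow> ('n + ('n \<times> 'n)) set \<times> ('n + ('n \<times> 'n)) set"
  assumes "\<forall>(i,j) \<in> D. i \<noteq> j"
    and "\<forall>x \<in> PG SP SN D. v \<bullet> x = 0"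
    and "\<forall>C \<in> aug_components SP SN D. bipartite_comp SP SN D C \<longrightarrow>
           is_bipartition SP SN D C (fst (bip C)) (snd (bip C))"
  shows "v \<in> span {edual (proj (fst (bip C))) - edual (proj (snd (bip C))) | C.
                     C \<in> aug_components SP SN D \<and> bipartite_comp SP SN D C}"
proof -
  let ?B = "{C \<in> aug_components SP SN D. bipartite_comp SP SN D C}"
  obtain c where "v = (\<Sum>C\<in>?B. c C *\<^sub>R (edual (proj (fst (bip C))) - edual (proj (snd (bip C)))))"
    using eq_sum_bipartite_components[OF assms(2), of "\<lambda>C. fst (bip C)" "\<lambda>C. snd (bip C)"] assms(3)
    by blast
  also have "\<dots> \<in> span {edual (proj (fst (bip C))) - edual (proj (snd (bip C))) | C.
                     C \<in> aug_components SP SN D \<and> bipartite_comp SP SN D C}"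
    by (intro span_sum span_scale span_base) blast
  finally show ?thesis .
qed

end
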